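(* For every $0<\epsilon<1$ and every integer $m\ge2$ there exists a scheduling game on $m$ identical machines of speed $1$ with (machine-dependent) priority lists, in which every job has negative deterioration $p_i(t)=\max\{\tau_i,b_i-a_it\}$ with $0\le a_i\le 1$, having a pure Nash equilibrium $\sigma$ with $C_{\max}(\sigma)\ge\left(3-\frac1m-\epsilon\right)OPT(G)$. Hence the bound $3-\frac1m$ on the price of anarchy of this class is tight.
   Context: Scheduling game: a finite set $N$ of $n$ jobs (players) and a set $M$ of $m$ machines. Machine $j$ has speed $s_j>0$ and a priority list $\pi_j$, a bijection $N\to\{1,\dots,n\}$; job $u$ has higher priority than $v$ on $j$ iff $\pi_j(u)<\pi_j(v)$. Negative deterioration: $p_i(t)=\max\{\tau_i,b_i-a_it\}$ with $b_i,a_i\ge0$, $\tau_i>0$ ($a_i=0$ gives a fixed-length job). A profile $\sigma\in M^N$ assigns each job to a machine. On machine $j$, the jobs assigned to it, listed in increasing $\pi_j$-order as $i_1,i_2,\dots$, are processed without idle time: $S_{i_1}(\sigma)=0$, $C_{i_k}(\sigma)=S_{i_k}(\sigma)+p_{i_k}(S_{i_k}(\sigma))/s_j$, $S_{i_{k+1}}(\sigma)=C_{i_k}(\sigma)$. The cost of job $i$ is $C_i(\sigma)$. A pure Nash equilibrium (NE) is a profile in which no job can strictly decrease its completion time by unilaterally changing its machine. Makespan $C_{\max}(\sigma)=\max_iC_i(\sigma)$; $OPT(G)=\min_\sigma C_{\max}(\sigma)$ over all profiles. *)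

theory Defs
  imports Complex_Main
begin

text \<open>Machine j has speed sp j and priority
  list pri j (job u before v on j iff pri j u < pri j v).\<close>

record game =
  njobs :: nat
  nmach :: nat
  sp    :: "nat \<Rightarrow> real"
  pri   :: "nat \<Rightarrow> nat \<Rightarrow> nat"
  da    :: "nat \<Rightarrow> real"
  db    :: "nat \<Rightarrow> real"
  tau   :: "nat \<Rightarrow> real"

definition valid_game :: "game \<Rightarrow> bool" where
  "valid_game G \<longleftrightarrow>
     njobs G \<ge> 1 \<and> nmach G \<ge> 1 \<and>
     (\<forall>j<nmach G. sp G j > 0 \<and> bij_betw (pri G j) {0..<njobs G} {1..njobs G}) \<and>
     (\<forall>i<njobs G. da G i \<ge> 0 \<and> db G i \<ge> 0 \<and> tau G i > 0)"

definition ptime :: "game \<Rightarrow> nat \<Rightarrow> real \<Rightarrow> real" where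
  "ptime G i t = max (tau G i) (db G i - da G i * t)"

fun run :: "game \<Rightarrow> real \<Rightarrow> nat list \<Rightarrow> real \<Rightarrow> real" where
  "run G s [] t = t"
| "run G s (i # is) t = run G s is (t + ptime G i t / s)"

definition profiles :: "game \<Rightarrow> (nat \<Rightarrow> nat) set" where
  "profiles G = {\<sigma>. (\<forall>i<njobs G. \<sigma> i < nmach G) \<and> (\<forall>i\<ge>njobs G. \<sigma> i = 0)}"

definition compl :: "game \<Rightarrow> (nat \<Rightarrow> nat) \<Rightarrow> nat \<Rightarrow> real" where
  "compl G \<sigma> i =
     (let j = \<sigma> i in
      run G (sp G j)
        (sort_key (pri G j) (filter (\<lambda>k. \<sigma> k = j \<and> pri G j k \<le> pri G j i) [0..<njobs G])) 0)"

definition makespan :: "game \<Rightarrow> (nat \<Rightarrow> nat) \<Rightarrow> real" where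
  "makespan G \<sigma> = Max ((compl G \<sigma>) ` {0..<njobs G})"

definition OPT :: "game \<Rightarrow> real" where
  "OPT G = Min (makespan G ` profiles G)"

definition is_NE :: "game \<Rightarrow> (nat \<Rightarrow> nat) \<Rightarrow> bool" where
  "is_NE G \<sigma> \<longleftrightarrow> \<sigma> \<in> profiles G \<and>
     (\<forall>i<njobs G. \<forall>j<nmach G. compl G \<sigma> i \<le> compl G (\<sigma>(i := j)) i)"

end

theory Submission
  imports Defs "HOL-Library.Multiset"
begin

(* Take m machines of speed 1 and 3m - 1 jobs: deteriorating jobs X_j with p(t) = max delta (1 - t),
   one job I of length 1, and jobs of fixed length ("fillers").  In the equilibrium, machine j first
   runs X_j, which ends at time 1, then fillers of total length 1 - 1/m, and I comes last on
   machine 0, finishing at 3 - 1/m.  A job moving to machine j queues behind X_j and its fillers,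
   so it cannot finish before 2 - 1/m (I finishes at 3 - 1/m again), while every job other than I
   already finishes by then.  In a better schedule the X_j run after time 1, when they only take
   delta, and the fillers are regrouped so that every machine has fixed load 1; thus
   OPT <= 1 + m delta, and delta = epsilon / (3m) gives the ratio. *)

section \<open>Priorities given by a list\<close>

fun index_of :: "'a list \<Rightarrow> 'a \<Rightarrow> nat" where
  "index_of [] x = 0"
| "index_of (y # ys) x = (if y = x then 0 else Suc (index_of ys x))"

lemma index_of_append:
  "index_of (xs @ ys) x = (if x \<in> set xs then index_of xs x else length xs + index_of ys x)"
  by (induction xs) auto

lemma index_of_less_length: "x \<in> set xs \<Longrightarrow> index_of xs x < length xs"
  by (induction xs) auto

lemma nth_index_of: "x \<in> set xs \<Longrightarrow> xs ! index_of xs x = x"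
  by (induction xs) auto

lemma index_of_nth: "distinct xs \<Longrightarrow> i < length xs \<Longrightarrow> index_of xs (xs ! i) = i"
proof (induction xs arbitrary: i)
  case (Cons a xs)
  then show ?case by (cases i) (auto simp: nth_mem)
qed simp

lemma map_index_of: "distinct xs \<Longrightarrow> map (index_of xs) xs = [0..<length xs]"
  by (rule nth_equalityI) (auto simp: index_of_nth)

definition priority_of_list :: "nat list \<Rightarrow> nat \<Rightarrow> nat" where
  "priority_of_list L k = Suc (index_of L k)"

lemma inj_on_priority_of_list: "inj_on (priority_of_list L) (set L)"
  by (rule inj_on_inverseI[where g = "\<lambda>p. L ! (p - 1)"]) (simp add: priority_of_list_def nth_index_of)

lemma bij_betw_priority_of_list:
  assumes "distinct L" "set L = {0..<n}"
  shows "bij_betw (priority_of_list L) {0..<n} {1..n}"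
proof -
  have "length L = n"
    using assms distinct_card by fastforce
  have "priority_of_list L ` set L = Suc ` set (map (index_of L) L)"
    by (auto simp: priority_of_list_def)
  also have "\<dots> = {1..n}"
    using \<open>length L = n\<close> by (simp add: map_index_of[OF assms(1)] atLeastLessThanSuc_atLeastAtMost)
  finally show ?thesis
    using inj_on_priority_of_list[of L] assms(2) by (simp add: bij_betw_def)
qed

lemma sort_key_priority_of_list:
  assumes "distinct L" "set L = {0..<n}"
  shows "sort_key (priority_of_list L) (filter P [0..<n]) = filter P L"
proof (rule sort_key_inj_key_eq)
  have "mset [0..<n] = mset L"
    using assms set_eq_iff_mset_eq_distinct[of "[0..<n]" L] by simp
  then show "mset (filter P [0..<n]) = mset (filter P L)"
    by (metis mset_filter)
  show "inj_on (priority_of_list L) (set (filter P [0..<n]))"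
    using inj_on_priority_of_list[of L] assms(2) by (auto intro: inj_on_subset)
  have "map (priority_of_list L) L = map Suc (map (index_of L) L)"
    by (simp add: priority_of_list_def)
  then have "sorted (map (priority_of_list L) L)"
    by (simp add: map_index_of[OF assms(1)] map_Suc_upt del: upt_Suc)
  then show "sorted (map (priority_of_list L) (filter P L))"
    by (rule sorted_filter)
qed

lemma compl_by_priority_list:
  assumes "distinct L" "set L = {0..<njobs G}" "pri G (\<sigma> i) = priority_of_list L"
    and "L = A @ i # B"
  shows "compl G \<sigma> i = run G (sp G (\<sigma> i)) ([k \<leftarrow> A. \<sigma> k = \<sigma> i] @ [i]) 0"
proof -
  let ?P = "\<lambda>k. \<sigma> k = \<sigma> i \<and> priority_of_list L k \<le> priority_of_list L i"
  have i: "i \<notin> set A" and AB: "set A \<inter> set B = {}" and "i \<notin> set B"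
    using assms(1,4) by auto
  have "priority_of_list L i = Suc (length A)"
    using i by (simp add: assms(4) priority_of_list_def index_of_append)
  moreover have "priority_of_list L k \<le> length A" if "k \<in> set A" for k
    using that index_of_less_length[OF that] by (simp add: assms(4) priority_of_list_def index_of_append)
  moreover have "length A + 1 < priority_of_list L k" if "k \<in> set B" for k
    using that AB \<open>i \<notin> set B\<close> by (auto simp: assms(4) priority_of_list_def index_of_append)
  ultimately have "filter ?P A = [k \<leftarrow> A. \<sigma> k = \<sigma> i]" and "filter ?P B = []"
    by (auto intro!: filter_cong filter_False dest: le_SucI) fastforce
  then have "filter ?P L = [k \<leftarrow> A. \<sigma> k = \<sigma> i] @ [i]"
    by (simp add: assms(4))
  then show ?thesis
    unfolding compl_def Let_def assms(3) sort_key_priority_of_list[OF assms(1,2)] by simp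
qed

section \<open>Processing sequences and schedules\<close>

lemma run_append: "run G s (xs @ ys) t = run G s ys (run G s xs t)"
  by (induction xs arbitrary: t) auto

lemma run_ge_start:
  assumes "\<forall>i\<in>set xs. 0 \<le> tau G i" "0 \<le> s"
  shows "t \<le> run G s xs t"
  using assms(1)
proof (induction xs arbitrary: t)
  case (Cons i xs)
  have "0 \<le> ptime G i t"
    using Cons.prems by (simp add: ptime_def le_max_iff_disj)
  then have "t \<le> t + ptime G i t / s"
    using assms(2) by simp
  also have "\<dots> \<le> run G s (i # xs) t"
    using Cons by simp
  finally show ?case .
qed simp

lemma run_le_run_append:
  assumes "\<forall>i\<in>set ys. 0 \<le> tau G i" "0 \<le> s"
  shows "run G s xs t \<le> run G s (xs @ ys) t"
  using run_ge_start[OF assms] by (simp add: run_append)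

lemma run_const_ptime:
  assumes "\<forall>i\<in>set xs. \<forall>t. ptime G i t = c i"
  shows "run G s xs t = t + (\<Sum>i\<leftarrow>xs. c i) / s"
  using assms by (induction xs arbitrary: t) (auto simp: add_divide_distrib)

lemma finite_profiles: "finite (profiles G)"
proof -
  have "profiles G = {\<sigma>. \<forall>i. (i \<in> {0..<njobs G} \<longrightarrow> \<sigma> i \<in> {0..<nmach G}) \<and>
      (i \<notin> {0..<njobs G} \<longrightarrow> \<sigma> i = 0)}"
    by (auto simp: profiles_def)
  also have "finite \<dots>"
    by (rule finite_set_of_finite_funs) simp_all
  finally show ?thesis .
qed

lemma OPT_le_makespan: "\<sigma> \<in> profiles G \<Longrightarrow> OPT G \<le> makespan G \<sigma>"
  unfolding OPT_def by (simp add: finite_profiles)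

lemma compl_le_makespan: "i < njobs G \<Longrightarrow> compl G \<sigma> i \<le> makespan G \<sigma>"
  unfolding makespan_def by simp

lemma makespan_le:
  assumes "1 \<le> njobs G" "\<And>i. i < njobs G \<Longrightarrow> compl G \<sigma> i \<le> c"
  shows "makespan G \<sigma> \<le> c"
  unfolding makespan_def using assms by simp

lemma compl_le_machine_run:
  assumes "distinct L" "set L = {0..<njobs G}" "pri G (\<sigma> i) = priority_of_list L" "i \<in> set L"
    and "\<forall>k\<in>set L. 0 \<le> tau G k" "0 \<le> sp G (\<sigma> i)"
  shows "compl G \<sigma> i \<le> run G (sp G (\<sigma> i)) [k \<leftarrow> L. \<sigma> k = \<sigma> i] 0"
proof -
  obtain A B where L: "L = A @ i # B"
    using split_list[OF assms(4)] by blast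
  have "compl G \<sigma> i = run G (sp G (\<sigma> i)) ([k \<leftarrow> A. \<sigma> k = \<sigma> i] @ [i]) 0"
    using assms(1-3) L by (rule compl_by_priority_list)
  also have "\<dots> \<le> run G (sp G (\<sigma> i)) (([k \<leftarrow> A. \<sigma> k = \<sigma> i] @ [i]) @ [k \<leftarrow> B. \<sigma> k = \<sigma> i]) 0"
    by (rule run_le_run_append) (use assms(5,6) L in auto)
  finally show ?thesis
    by (simp add: L)
qed

section \<open>The lower-bound instance\<close>

(* Jobs 0..<m are the deteriorating jobs X_j, job m is the unit job I, job m + j (0 < j < m) is
   the filler of length 1 - 1/m of machine j, and the m - 1 jobs 2m..<3m-1 of length 1/m
   together fill machine 0. *)
locale tight_instance =
  fixes m :: nat and \<delta> :: real
  assumes two_le_m: "2 \<le> m" and \<delta>_pos: "0 < \<delta>" and \<delta>_le_1: "\<delta> \<le> 1"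
begin

definition filler :: "nat \<Rightarrow> nat list" where
  "filler j = (if j = 0 then [2*m..<3*m-1] else [m+j])"

definition front :: "nat \<Rightarrow> nat list" where
  "front j = j # filler j"

(* Fixed jobs precede deteriorating ones; the bound on OPT relies on this. *)
definition rear :: "nat \<Rightarrow> nat list" where
  "rear j = [k \<leftarrow> [Suc m..<3*m-1] @ [0..<m]. k \<notin> set (front j)]"

definition priority_list :: "nat \<Rightarrow> nat list" where
  "priority_list j = front j @ m # rear j"

definition fixed_length :: "nat \<Rightarrow> real" where
  "fixed_length k = (if k = m then 1 else if k < 2*m then 1 - 1/m else 1/m)"

definition tight_game :: game where
  "tight_game = (| njobs = 3*m - 1, nmach = m, sp = \<lambda>_. 1,
     pri = \<lambda>j. priority_of_list (priority_list j),
     da = \<lambda>k. if k < m then 1 else 0, db = \<lambda>k. if k < m then 1 else fixed_length k,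
     tau = \<lambda>k. if k < m then \<delta> else fixed_length k |)"

definition eq_profile :: "nat \<Rightarrow> nat" where
  "eq_profile k = (if k < m then k else if k < 2*m then k - m else 0)"

(* X_0 goes to machine 1, the other X_j and I to machine 0, and the short fillers one to each
   machine j > 0. *)
definition opt_profile :: "nat \<Rightarrow> nat" where
  "opt_profile k = (if k = 0 then 1 else if k \<le> m then 0 else if k < 2*m then k - m
     else if k < 3*m - 1 then k + 1 - 2*m else 0)"

lemma tight_game_simps [simp]:
  "njobs tight_game = 3*m - 1" "nmach tight_game = m" "sp tight_game j = 1"
  "pri tight_game j = priority_of_list (priority_list j)"
  by (simp_all add: tight_game_def)

lemma fixed_length_pos: "0 < fixed_length k"
  using two_le_m by (simp add: fixed_length_def)

lemma tau_nonneg: "0 \<le> tau tight_game k"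
  using \<delta>_pos fixed_length_pos[of k] by (simp add: tight_game_def)

lemma ptime_deteriorating: "k < m \<Longrightarrow> ptime tight_game k t = max \<delta> (1 - t)"
  by (simp add: tight_game_def ptime_def)

lemma ptime_fixed: "m \<le> k \<Longrightarrow> ptime tight_game k t = fixed_length k"
  by (simp add: tight_game_def ptime_def)

lemma run_fixed:
  "\<forall>k\<in>set xs. m \<le> k \<Longrightarrow> run tight_game 1 xs t = t + (\<Sum>k\<leftarrow>xs. fixed_length k)"
  using run_const_ptime[of xs tight_game fixed_length] by (simp add: ptime_fixed)

lemma run_deteriorating_le:
  "\<forall>k\<in>set xs. k < m \<Longrightarrow> run tight_game 1 xs t \<le> max t 1 + \<delta> * length xs"
proof (induction xs arbitrary: t)
  case (Cons k xs)
  have "run tight_game 1 (k # xs) t = run tight_game 1 xs (t + max \<delta> (1 - t))"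
    using Cons.prems by (simp add: ptime_deteriorating)
  also have "\<dots> \<le> max (t + max \<delta> (1 - t)) 1 + \<delta> * length xs"
    by (rule Cons.IH) (use Cons.prems in simp)
  also have "\<dots> \<le> max t 1 + \<delta> * length (k # xs)"
    using \<delta>_pos by (auto simp: algebra_simps)
  finally show ?case .
qed simp

lemma set_front: "j < m \<Longrightarrow> set (front j) = {k. k < 3*m-1 \<and> k \<noteq> m \<and> eq_profile k = j}"
  using two_le_m by (auto simp: front_def filler_def eq_profile_def)

lemma distinct_front: "j < m \<Longrightarrow> distinct (front j)"
  by (auto simp: front_def filler_def)

lemma front_subset: "j < m \<Longrightarrow> set (front j) \<subseteq> {0..<3*m-1} - {m}"
  using set_front by auto

lemma set_rear: "set (rear j) = ({Suc m..<3*m-1} \<union> {0..<m}) - set (front j)"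
  by (auto simp: rear_def)

lemma distinct_rear: "distinct (rear j)"
  unfolding rear_def by (rule distinct_filter) simp

lemma distinct_priority_list: "j < m \<Longrightarrow> distinct (priority_list j)"
  using front_subset[of j] distinct_front[of j] distinct_rear[of j] set_rear[of j]
  unfolding priority_list_def by auto

lemma set_priority_list: "j < m \<Longrightarrow> set (priority_list j) = {0..<3*m-1}"
  using front_subset[of j] set_rear[of j] two_le_m unfolding priority_list_def by auto

lemma sum_fixed_length_filler:
  assumes "j < m" shows "(\<Sum>k\<leftarrow>filler j. fixed_length k) = 1 - 1/m"
proof (cases "j = 0")
  case True
  have "(\<Sum>k\<leftarrow>[2*m..<3*m-1]. fixed_length k) = (\<Sum>k\<leftarrow>[2*m..<3*m-1]. 1/m)"
    by (rule arg_cong[where f = sum_list], rule map_cong) (auto simp: fixed_length_def)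
  also have "\<dots> = real (m - 1) / m"
    by (simp add: sum_list_triv)
  also have "\<dots> = 1 - 1/m"
    using two_le_m by (simp add: of_nat_diff diff_divide_distrib)
  finally show ?thesis
    using True by (simp add: filler_def)
next
  case False
  then show ?thesis
    using assms by (simp add: filler_def fixed_length_def)
qed

lemma run_front:
  assumes "j < m" shows "run tight_game 1 (front j) 0 = 2 - 1/m"
proof -
  have "run tight_game 1 (front j) 0 = run tight_game 1 (filler j) 1"
    using assms \<delta>_le_1 by (simp add: front_def ptime_deteriorating)
  also have "\<dots> = 1 + (\<Sum>k\<leftarrow>filler j. fixed_length k)"
    by (rule run_fixed) (auto simp: filler_def)
  finally show ?thesis
    using sum_fixed_length_filler[OF assms] by simp
qed

lemma valid_tight_game: "valid_game tight_game"
proof -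
  have "bij_betw (priority_of_list (priority_list j)) {0..<3*m-1} {1..3*m-1}" if "j < m" for j
    using bij_betw_priority_of_list distinct_priority_list set_priority_list that by blast
  then show ?thesis
    using two_le_m \<delta>_pos fixed_length_pos by (auto simp: valid_game_def tight_game_def less_imp_le)
qed

lemma compl_tight_game:
  assumes "\<sigma> i < m" "priority_list (\<sigma> i) = A @ i # B"
  shows "compl tight_game \<sigma> i = run tight_game 1 ([k \<leftarrow> A. \<sigma> k = \<sigma> i] @ [i]) 0"
proof -
  have "compl tight_game \<sigma> i = run tight_game (sp tight_game (\<sigma> i)) ([k \<leftarrow> A. \<sigma> k = \<sigma> i] @ [i]) 0"
    by (rule compl_by_priority_list[OF distinct_priority_list[OF assms(1)] _ _ assms(2)])
      (simp_all add: set_priority_list[OF assms(1)])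
  then show ?thesis
    by simp
qed

lemma eq_profile_less: "eq_profile k < m"
  using two_le_m by (auto simp: eq_profile_def)

lemma eq_profile_in_profiles: "eq_profile \<in> profiles tight_game"
  using eq_profile_less two_le_m by (auto simp: profiles_def eq_profile_def)

lemma compl_eq_profile_le:
  assumes "i < 3*m-1" "i \<noteq> m"
  shows "compl tight_game eq_profile i \<le> 2 - 1/m"
proof -
  let ?j = "eq_profile i"
  have front: "set (front ?j) = {k. k < 3*m-1 \<and> k \<noteq> m \<and> eq_profile k = ?j}"
    by (rule set_front[OF eq_profile_less])
  then obtain A B where AB: "front ?j = A @ i # B"
    using assms by (metis (mono_tags, lifting) mem_Collect_eq split_list)
  have "[k \<leftarrow> A. eq_profile k = ?j] = A"
    using front AB by (auto intro: filter_True)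
  then have "compl tight_game eq_profile i = run tight_game 1 (A @ [i]) 0"
    using compl_tight_game[of eq_profile i A "B @ m # rear ?j"] eq_profile_less
    by (simp add: priority_list_def AB)
  also have "\<dots> \<le> run tight_game 1 ((A @ [i]) @ B) 0"
    by (rule run_le_run_append) (simp_all add: tau_nonneg)
  also have "\<dots> = 2 - 1/m"
    using run_front[OF eq_profile_less, of i] by (simp add: AB)
  finally show ?thesis .
qed

lemma compl_deviation_ge:
  assumes "i < 3*m-1" "j < m" "eq_profile i \<noteq> j"
  shows "2 - 1/m \<le> compl tight_game (eq_profile(i := j)) i"
proof -
  let ?\<sigma> = "eq_profile(i := j)"
  have "i \<notin> set (front j)"
    using set_front assms by auto
  moreover have "i \<in> set (priority_list j)"
    using set_priority_list assms by auto
  ultimately obtain A B where AB: "m # rear j = A @ i # B"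
    by (metis Un_iff priority_list_def set_append split_list)
  have front_on_j: "[k \<leftarrow> front j. ?\<sigma> k = j] = front j"
    using set_front[OF assms(2)] \<open>i \<notin> set (front j)\<close> by (auto intro: filter_True)
  have "compl tight_game ?\<sigma> i = run tight_game 1 ([k \<leftarrow> front j @ A. ?\<sigma> k = j] @ [i]) 0"
    using compl_tight_game[of ?\<sigma> i "front j @ A" B] assms by (simp add: priority_list_def AB)
  also have "\<dots> = run tight_game 1 (front j @ ([k \<leftarrow> A. ?\<sigma> k = j] @ [i])) 0"
    using front_on_j by simp
  also have "\<dots> \<ge> run tight_game 1 (front j) 0"
    by (rule run_le_run_append) (simp_all add: tau_nonneg)
  finally show ?thesis
    using run_front[OF assms(2)] by simp
qed

lemma compl_unit_job_moved:
  assumes "j < m"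
  shows "compl tight_game (eq_profile(m := j)) m = 3 - 1/m"
proof -
  let ?\<sigma> = "eq_profile(m := j)"
  have front_on_j: "[k \<leftarrow> front j. ?\<sigma> k = j] = front j"
    using set_front[OF assms] by (auto intro: filter_True)
  have "compl tight_game ?\<sigma> m = run tight_game 1 (front j @ [m]) 0"
    using compl_tight_game[of ?\<sigma> m "front j" "rear j"] assms front_on_j by (simp add: priority_list_def)
  also have "\<dots> = 3 - 1/m"
    using run_front[OF assms] by (simp add: run_append ptime_fixed fixed_length_def)
  finally show ?thesis .
qed

lemma compl_unit_job: "compl tight_game eq_profile m = 3 - 1/m"
proof -
  have "eq_profile(m := 0) = eq_profile"
    by (simp add: fun_eq_iff eq_profile_def)
  then show ?thesis
    using compl_unit_job_moved[of 0] two_le_m by simp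
qed

lemma eq_profile_is_NE: "is_NE tight_game eq_profile"
  unfolding is_NE_def
proof (intro conjI allI impI eq_profile_in_profiles)
  fix i j
  assume "i < njobs tight_game" "j < nmach tight_game"
  then have i: "i < 3*m-1" and j: "j < m"
    by simp_all
  show "compl tight_game eq_profile i \<le> compl tight_game (eq_profile(i := j)) i"
  proof (cases "eq_profile i = j")
    case False
    then show ?thesis
      using i j compl_eq_profile_le compl_deviation_ge compl_unit_job_moved compl_unit_job
      by (cases "i = m") force+
  qed auto
qed

lemma makespan_eq_profile: "3 - 1/m \<le> makespan tight_game eq_profile"
  using compl_le_makespan[of m tight_game eq_profile] compl_unit_job two_le_m by simp

lemma opt_profile_less: "opt_profile k < m"
  using two_le_m by (auto simp: opt_profile_def)

lemma opt_profile_in_profiles: "opt_profile \<in> profiles tight_game"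
  using opt_profile_less two_le_m by (auto simp: profiles_def opt_profile_def)

lemma fixed_jobs_opt_profile:
  assumes "j < m"
  shows "{k. m \<le> k \<and> k < 3*m-1 \<and> opt_profile k = j} = (if j = 0 then {m} else {m + j, 2*m - 1 + j})"
  using assms two_le_m by (auto simp: opt_profile_def)

lemma load_opt_profile:
  assumes "j < m"
  shows "(\<Sum>k | m \<le> k \<and> k < 3*m-1 \<and> opt_profile k = j. fixed_length k) = 1"
proof -
  have "(\<Sum>k | m \<le> k \<and> k < 3*m-1 \<and> opt_profile k = j. fixed_length k)
      = sum fixed_length (if j = 0 then {m} else {m + j, 2*m - 1 + j})"
    using fixed_jobs_opt_profile[OF assms] by simp
  also have "\<dots> = 1"
  proof (cases "j = 0")
    case False
    have "m + j \<noteq> 2*m - 1 + j" "fixed_length (m + j) = 1 - 1/m" "fixed_length (2*m - 1 + j) = 1/m"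
      using False assms two_le_m unfolding fixed_length_def by auto
    then show ?thesis
      using False by simp
  qed (simp add: fixed_length_def)
  finally show ?thesis .
qed

lemma filler_subset: "j < m \<Longrightarrow> set (filler j) \<subseteq> {Suc m..<3*m-1}"
  by (auto simp: filler_def)

lemma machine_run_opt_profile_le:
  assumes "j < m"
  shows "run tight_game 1 [k \<leftarrow> priority_list j. opt_profile k = j] 0 \<le> 1 + m * \<delta>"
proof -
  define F where "F = [k \<leftarrow> filler j @ m # [k \<leftarrow> [Suc m..<3*m-1]. k \<notin> set (front j)]. opt_profile k = j]"
  define X where "X = [k \<leftarrow> [k \<leftarrow> [0..<m]. k \<notin> set (front j)]. opt_profile k = j]"
  have "opt_profile j \<noteq> j"
    using assms by (auto simp: opt_profile_def)
  moreover have "priority_list j = j # (filler j @ m # [k \<leftarrow> [Suc m..<3*m-1]. k \<notin> set (front j)])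
      @ [k \<leftarrow> [0..<m]. k \<notin> set (front j)]"
    unfolding priority_list_def rear_def filter_append by (simp add: front_def)
  ultimately have split: "[k \<leftarrow> priority_list j. opt_profile k = j] = F @ X"
    unfolding F_def X_def by (simp only: filter.simps filter_append if_False)
  then have "distinct F"
    using distinct_filter[OF distinct_priority_list[OF assms]] by (metis distinct_append)
  have F_fixed: "set F \<subseteq> {k. m \<le> k \<and> k < 3*m-1 \<and> opt_profile k = j}"
    using filler_subset[OF assms] two_le_m by (auto simp: F_def)
  have "(\<Sum>k\<leftarrow>F. fixed_length k) = (\<Sum>k\<in>set F. fixed_length k)"
    by (rule sum_list_distinct_conv_sum_set[OF \<open>distinct F\<close>])
  also have "\<dots> \<le> (\<Sum>k | m \<le> k \<and> k < 3*m-1 \<and> opt_profile k = j. fixed_length k)"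
    by (rule sum_mono2[OF _ F_fixed]) (simp_all add: less_imp_le fixed_length_pos)
  finally have load_F: "(\<Sum>k\<leftarrow>F. fixed_length k) \<le> 1"
    using load_opt_profile[OF assms] by simp
  have "run tight_game 1 F 0 = (\<Sum>k\<leftarrow>F. fixed_length k)"
    using run_fixed[of F 0] F_fixed by auto
  then have "run tight_game 1 (F @ X) 0 = run tight_game 1 X (\<Sum>k\<leftarrow>F. fixed_length k)"
    by (simp add: run_append)
  also have "\<dots> \<le> max (\<Sum>k\<leftarrow>F. fixed_length k) 1 + \<delta> * length X"
    by (rule run_deteriorating_le) (simp add: X_def)
  also have "\<dots> \<le> 1 + m * \<delta>"
  proof -
    have "length X \<le> m"
      unfolding X_def by (metis length_filter_le length_upt minus_nat.diff_0 order_trans)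
    then show ?thesis
      using load_F \<delta>_pos by (simp add: mult.commute)
  qed
  finally show ?thesis
    using split by simp
qed

lemma OPT_tight_game_le: "OPT tight_game \<le> 1 + m * \<delta>"
proof -
  have "compl tight_game opt_profile i \<le> 1 + m * \<delta>" if "i < 3*m-1" for i
  proof -
    let ?j = "opt_profile i"
    have "compl tight_game opt_profile i \<le> run tight_game 1 [k \<leftarrow> priority_list ?j. opt_profile k = ?j] 0"
      using compl_le_machine_run[of "priority_list ?j" tight_game opt_profile i] that opt_profile_less
        distinct_priority_list set_priority_list tau_nonneg by simp
    also have "\<dots> \<le> 1 + m * \<delta>"
      by (rule machine_run_opt_profile_le[OF opt_profile_less])
    finally show ?thesis .
  qed
  then have "makespan tight_game opt_profile \<le> 1 + m * \<delta>"
    using two_le_m by (intro makespan_le) simp_all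
  then show ?thesis
    using OPT_le_makespan[OF opt_profile_in_profiles] by simp
qed

end

theorem theorem13:
  fixes \<epsilon> :: real and m :: nat
  assumes "0 < \<epsilon>" and "\<epsilon> < 1" and "m \<ge> 2"
  shows "\<exists>G \<sigma>. valid_game G \<and> nmach G = m \<and> (\<forall>j<m. sp G j = 1) \<and>
           (\<forall>i<njobs G. da G i \<le> 1) \<and>
           is_NE G \<sigma> \<and> makespan G \<sigma> \<ge> (3 - 1 / real m - \<epsilon>) * OPT G"
proof -
  define \<delta> where "\<delta> = \<epsilon> / (3 * m)"
  interpret tight_instance m \<delta>
    using assms by unfold_locales (auto simp: \<delta>_def)
  let ?c = "3 - 1 / real m - \<epsilon>"
  have "0 \<le> 1 / real m" "1 / real m \<le> 1 / 2"
    using assms(3) by (simp_all add: field_simps)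
  then have c: "0 \<le> ?c" "?c \<le> 3"
    using assms(1,2) by linarith+
  have "OPT tight_game \<le> 1 + \<epsilon> / 3"
    using OPT_tight_game_le assms by (simp add: \<delta>_def)
  then have "?c * OPT tight_game \<le> ?c * (1 + \<epsilon> / 3)"
    using c(1) by (rule mult_left_mono)
  also have "\<dots> \<le> ?c + 3 * (\<epsilon> / 3)"
    using c(2) assms(1) by (simp add: distrib_left mult_right_mono)
  also have "\<dots> \<le> makespan tight_game eq_profile"
    using makespan_eq_profile by simp
  finally show ?thesis
    using valid_tight_game eq_profile_is_NE by (auto simp: tight_game_def)
qed

end
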